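(* Let $K\ge2$, $p\in(0,1)$, $M>0$, and let $f\in\mathcal M_p$ with $\sigma_f$ equal to the identity (so item $1$ is top-ranked). Then the output of \textsc{NE} with parameter $M$ satisfies $$\mathbb P(i_{\mathrm{out}}\neq 1)\le (2^{K-1}-1)\,p^M.$$
   Context: Items are $[K]=\{1,\dots,K\}$, and $\mathcal S=\{S\subseteq[K]:|S|\ge 2\}$. A preference $f$ is a family of numbers $f(i\mid S)$, $S\in\mathcal S$, $i\in[K]$. For $p\in(0,1)$, the $p$-Separable family $\mathcal M_p$ consists of all $f$ such that (i) $f(i\mid S)>0$ iff $i\in S$; (ii) $\sum_{i\in S}f(i\mid S)=1$ for all $S\in\mathcal S$; (iii) there is a bijection $\sigma_f:[K]\to[K]$ (the ranking; $\sigma_f(i)=k$ means item $i$ is in $k$-th highest position) such that for all $S\in\mathcal S$ and $i,i'\in S$ with $\sigma_f(i')<\sigma_f(i)$, $f(i\mid S)\le p\, f(i'\mid S)$. Interaction model: at each time $t=1,2,\dots$ a display set $S_t\in\mathcal S$ is chosen based on the past, and a choice $X_t\in S_t$ is observed, which conditionally on the past and $S_t$ has distribution $f(\cdot\mid S_t)$. Algorithm \textsc{NE} (Nested Elimination) with parameter $M>0$: set $W_0(i)=0$ for all $i\in[K]$, $S_{\mathrm{active}}=[K]$, $t=0$. While $|S_{\mathrm{active}}|>1$: set $t\leftarrow t+1$; display $S_{\mathrm{active}}$ and observe $X_t$; set $W_t(X_t)=W_{t-1}(X_t)+1$ and $W_t(i)=W_{t-1}(i)$ for $i\ne X_t$;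 let $\pi_t:[|S_{\mathrm{active}}|]\to S_{\mathrm{active}}$ be a bijection with $W_t(\pi_t(1))\ge W_t(\pi_t(2))\ge\cdots$ (ties broken arbitrarily); find the smallest $k\in\{1,\dots,|S_{\mathrm{active}}|-1\}$ with $\sum_{i=1}^kW_t(\pi_t(i))-k\,W_t(\pi_t(k+1))\ge M$, and if it exists set $S_{\mathrm{active}}\leftarrow\{\pi_t(1),\dots,\pi_t(k)\}$. The stopping time $\tau$ is the final value of $t$ and $i_{\mathrm{out}}$ is the unique element of the final $S_{\mathrm{active}}$. *)

theory Defs
  imports "HOL-Probability.Probability"
begin

definition display_sets :: "nat \<Rightarrow> nat set set" where
  "display_sets K = {S. S \<subseteq> {1..K} \<and> card S \<ge> 2}"

text \<open>f is in the p-Separable family M_p with ranking sigma.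
  f i S stands for f(i | S).\<close>
definition in_Mp_ranking :: "nat \<Rightarrow> real \<Rightarrow> (nat \<Rightarrow> nat set \<Rightarrow> real) \<Rightarrow> (nat \<Rightarrow> nat) \<Rightarrow> bool" where
  "in_Mp_ranking K p f \<sigma> \<longleftrightarrow>
     (\<forall>S\<in>display_sets K. (\<forall>i\<in>{1..K}. f i S > 0 \<longleftrightarrow> i \<in> S) \<and> (\<Sum>i\<in>S. f i S) = 1) \<and>
     bij_betw \<sigma> {1..K} {1..K} \<and>
     (\<forall>S\<in>display_sets K. \<forall>i\<in>S. \<forall>i'\<in>S. \<sigma> i' < \<sigma> i \<longrightarrow> f i S \<le> p * f i' S)"

definition in_Mp :: "nat \<Rightarrow> real \<Rightarrow> (nat \<Rightarrow> nat set \<Rightarrow> real) \<Rightarrow> bool" where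
  "in_Mp K p f \<longleftrightarrow> (\<exists>\<sigma>. in_Mp_ranking K p f \<sigma>)"

definition valid_tiebreak :: "((nat \<Rightarrow> nat) \<Rightarrow> nat set \<Rightarrow> nat list) \<Rightarrow> bool" where
  "valid_tiebreak rk \<longleftrightarrow> (\<forall>W S. finite S \<longrightarrow>
      distinct (rk W S) \<and> set (rk W S) = S \<and> sorted_wrt (\<lambda>a b. W a \<ge> W b) (rk W S))"

definition choice_pmf :: "(nat \<Rightarrow> nat set \<Rightarrow> real) \<Rightarrow> nat set \<Rightarrow> nat pmf" where
  "choice_pmf f S = embed_pmf (\<lambda>i. if i \<in> S then f i S else 0)"

text \<open>Elimination step: with L = [rk(1),...,rk(n)] (0-indexed list), find the smallest
  k in {1..n-1} with sum_{i=1}^k W(rk i) - k W(rk(k+1)) >= M; if it exists the new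
  active set is {rk 1,...,rk k}, otherwise unchanged.\<close>
definition ne_update :: "real \<Rightarrow> ((nat \<Rightarrow> nat) \<Rightarrow> nat set \<Rightarrow> nat list) \<Rightarrow> (nat \<Rightarrow> nat) \<Rightarrow> nat set \<Rightarrow> nat set" where
  "ne_update M rk W S =
     (let L = rk W S;
          ks = filter (\<lambda>k. (\<Sum>i<k. real (W (L ! i))) - real k * real (W (L ! k)) \<ge> M) [1..<length L]
      in if ks = [] then S else set (take (hd ks) L))"

text \<open>Nested Elimination run from win counts W and active set S; returns i_out.
  Its sub-probability distribution only records terminating runs.\<close>
partial_function (spmf) ne_run :: "real \<Rightarrow> ((nat \<Rightarrow> nat) \<Rightarrow> nat set \<Rightarrow> nat list) \<Rightarrow> (nat \<Rightarrow> nat set \<Rightarrow> real)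
    \<Rightarrow> (nat \<Rightarrow> nat) \<Rightarrow> nat set \<Rightarrow> nat spmf" where
  "ne_run M rk f W S =
     (if card S \<le> 1 then return_spmf (the_elem S)
      else bind_spmf (spmf_of_pmf (choice_pmf f S))
             (\<lambda>x. let W' = W(x := Suc (W x)) in ne_run M rk f W' (ne_update M rk W' S)))"

definition NE_output :: "real \<Rightarrow> ((nat \<Rightarrow> nat) \<Rightarrow> nat set \<Rightarrow> nat list) \<Rightarrow> (nat \<Rightarrow> nat set \<Rightarrow> real) \<Rightarrow> nat \<Rightarrow> nat spmf" where
  "NE_output M rk f K = ne_run M rk f (\<lambda>_. 0) {1..K}"

end

theory Submission
  imports Defs
begin

text \<open>For every nonempty set \<open>A\<close> of lower-ranked items let \<open>Z\<^sub>A = (\<Sum>i\<in>A. W i) - |A| W 1\<close>.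
  NE can discard item 1 only when the elimination test succeeds on a prefix \<open>A\<close> of the
  ranking that excludes 1, and then \<open>Z\<^sub>A \<ge> M\<close>. While item 1 is still active, each
  \<open>p powr (M - Z\<^sub>A)\<close> is a supermartingale: a win of \<open>i \<in> A\<close> multiplies it by \<open>1/p\<close>, a win of
  item 1 by \<open>p^|A|\<close>, and \<open>p\<close>-separability bounds the total choice probability of \<open>A\<close> by a
  geometric series in \<open>p\<close> times that of item 1. Hence the sum of these potentials over
  the \<open>2^(K-1) - 1\<close> choices of \<open>A\<close>, which is \<open>(2^(K-1) - 1) p^M\<close> initially, bounds the
  probability that 1 is ever eliminated.\<close>

lemma admissible_measure_spmf_le:
  "ccpo.admissible (fun_lub lub_spmf) (fun_ord (ord_spmf (=)))
     (\<lambda>g. measure (measure_spmf (g x)) X \<le> (c::real))"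
proof (rule ccpo.admissibleI)
  fix A :: "('a \<Rightarrow> 'b spmf) set"
  assume ch: "Complete_Partial_Order.chain (fun_ord (ord_spmf (=))) A" and ne: "A \<noteq> {}"
    and le: "\<forall>g\<in>A. measure (measure_spmf (g x)) X \<le> c"
  let ?Y = "{y. \<exists>g\<in>A. y = g x}"
  have "Complete_Partial_Order.chain (ord_spmf (=)) ?Y" using chain_fun[OF ch] .
  then have "measure (measure_spmf (fun_lub lub_spmf A x)) X = (SUP y\<in>?Y. measure (measure_spmf y) X)"
    using measure_lub_spmf ne by (fastforce simp: fun_lub_def)
  also have "\<dots> \<le> c" using le ne by (auto intro!: cSUP_least)
  finally show "measure (measure_spmf (fun_lub lub_spmf A x)) X \<le> c" .
qed

lemma measure_measure_spmf_bind_pmf: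
  "measure (measure_spmf (bind_pmf P h)) X = measure_pmf.expectation P (\<lambda>x. measure (measure_spmf (h x)) X)"
  unfolding measure_spmf_bind_pmf
  by (subst measure_pmf.measure_bind[where N="count_space UNIV"])
     (auto simp: measure_spmf_in_space_subprob_algebra)

lemma sum_decaying_le_geometric:
  fixes g :: "'a::linorder \<Rightarrow> real"
  assumes p: "0 < p" "p < 1"
    and nonneg: "\<And>i. i \<in> S \<Longrightarrow> 0 \<le> g i"
    and decay: "\<And>i j. i \<in> S \<Longrightarrow> j \<in> S \<Longrightarrow> j < i \<Longrightarrow> g i \<le> p * g j"
    and "finite B" "B \<subseteq> S" "c \<in> S" "\<forall>b\<in>B. c < b"
  shows "sum g B \<le> g c * p * (1 - p ^ card B) / (1 - p)"
  using assms(5-8)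
proof (induction "card B" arbitrary: B c)
  case 0
  then show ?case by simp
next
  case (Suc n)
  define b where "b = Min B"
  have "B \<noteq> {}" using Suc.hyps(2) by auto
  then have b: "b \<in> B" "\<forall>x\<in>B - {b}. b < x"
    using Suc.prems unfolding b_def by (auto intro: le_neq_trans)
  have "card (B - {b}) = n" using Suc.hyps(2) b by simp
  moreover have "sum g (B - {b}) \<le> g b * p * (1 - p ^ card (B - {b})) / (1 - p)"
    using Suc b by (intro Suc.hyps(1)) auto
  moreover have "sum g B = g b + sum g (B - {b})"
    using Suc.prems b by (simp add: sum.remove)
  ultimately have "sum g B \<le> g b * ((1 - p ^ Suc n) / (1 - p))"
    using p by (simp add: field_simps)
  also have "\<dots> \<le> (p * g c) * ((1 - p ^ Suc n) / (1 - p))"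
    using decay[of b c] Suc.prems b p power_le_one[of p "Suc n"]
    by (intro mult_right_mono divide_nonneg_nonneg) auto
  finally show ?case using Suc.hyps(2) by (simp add: mult.commute)
qed

lemma in_Mp_rankingD:
  assumes "in_Mp_ranking K p f id" "S \<in> display_sets K"
  shows "\<And>i. i \<in> S \<Longrightarrow> 0 < f i S" "(\<Sum>i\<in>S. f i S) = 1"
    "\<And>i j. i \<in> S \<Longrightarrow> j \<in> S \<Longrightarrow> j < i \<Longrightarrow> f i S \<le> p * f j S"
    "S \<subseteq> {1..K}" "finite S"
proof -
  have "S \<subseteq> {1..K}" using assms(2) unfolding display_sets_def by auto
  then show "\<And>i. i \<in> S \<Longrightarrow> 0 < f i S" "(\<Sum>i\<in>S. f i S) = 1"
    "\<And>i j. i \<in> S \<Longrightarrow> j \<in> S \<Longrightarrow> j < i \<Longrightarrow> f i S \<le> p * f j S"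
    "S \<subseteq> {1..K}" "finite S"
    using assms finite_subset unfolding in_Mp_ranking_def by (auto 4 3)
qed

lemma pmf_choice_pmf:
  assumes "in_Mp_ranking K p f id" "S \<in> display_sets K"
  shows "pmf (choice_pmf f S) x = (if x \<in> S then f x S else 0)"
proof -
  note F = in_Mp_rankingD[OF assms]
  have nonneg: "\<And>i. 0 \<le> (if i \<in> S then f i S else 0)" using F(1) by (simp add: less_imp_le)
  have "(\<integral>\<^sup>+ i. ennreal (if i \<in> S then f i S else 0) \<partial>count_space UNIV)
      = (\<Sum>i\<in>S. ennreal (f i S))"
    using F(5) by (subst nn_integral_count_space') auto
  also have "\<dots> = 1" using F(1,2) by (subst sum_ennreal) (auto simp: less_imp_le)
  finally show ?thesis unfolding choice_pmf_def using nonneg by (subst pmf_embed_pmf) auto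
qed

definition excess_wins :: "'a \<Rightarrow> 'a set \<Rightarrow> ('a \<Rightarrow> nat) \<Rightarrow> real" where
  "excess_wins t A W = (\<Sum>i\<in>A. real (W i)) - real (card A) * real (W t)"

lemma excess_wins_fun_upd:
  assumes "finite A" "t \<notin> A"
  shows "excess_wins t A (W(x := Suc (W x))) =
    excess_wins t A W + (if x \<in> A then 1 else 0) - (if x = t then real (card A) else 0)"
proof -
  have "(\<Sum>i\<in>A. real ((W(x := Suc (W x))) i)) = (\<Sum>i\<in>A. real (W i) + (if i = x then 1 else 0))"
    by (intro sum.cong) auto
  also have "\<dots> = (\<Sum>i\<in>A. real (W i)) + (if x \<in> A then 1 else 0)"
    using assms(1) by (simp add: sum.distrib)
  finally show ?thesis using assms unfolding excess_wins_def by (auto simp: algebra_simps)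
qed

lemma choice_mass_le_top:
  assumes p: "0 < p" "p < 1" and f: "in_Mp_ranking K p f id"
    and S: "S \<in> display_sets K" "1 \<in> S" and A: "A \<subseteq> {2..K}"
  shows "(\<Sum>x\<in>S \<inter> A. f x S) * (1/p - 1) \<le> f 1 S * (1 - p ^ card A)"
proof -
  note F = in_Mp_rankingD[OF f S(1)]
  have finA: "finite A" using A finite_subset by blast
  have "(\<Sum>x\<in>S \<inter> A. f x S) \<le> f 1 S * p * (1 - p ^ card (S \<inter> A)) / (1 - p)"
    using F S(2) A finA by (intro sum_decaying_le_geometric[OF p, of S]) (auto intro: less_imp_le)
  then have "(\<Sum>x\<in>S \<inter> A. f x S) * ((1 - p) / p) \<le> f 1 S * (1 - p ^ card (S \<inter> A))"
    using p by (simp add: field_simps)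
  also have "\<dots> \<le> f 1 S * (1 - p ^ card A)"
    using F(1)[OF S(2)] p finA card_mono[OF finA, of "S \<inter> A"]
    by (intro mult_left_mono power_decreasing) auto
  finally show ?thesis using p by (simp add: field_simps)
qed

lemma expected_potential_le:
  assumes p: "0 < p" "p < 1" and f: "in_Mp_ranking K p f id"
    and S: "S \<in> display_sets K" "1 \<in> S" and A: "A \<subseteq> {2..K}"
  shows "(\<Sum>x\<in>S. f x S * p powr (M - excess_wins 1 A (W(x := Suc (W x)))))
    \<le> p powr (M - excess_wins 1 A W)"
proof -
  note F = in_Mp_rankingD[OF f S(1)]
  have finA: "finite A" and notin: "1 \<notin> A" using A finite_subset by auto
  define P where "P = p powr (M - excess_wins 1 A W)"
  have factor: "p powr (M - excess_wins 1 A (W(x := Suc (W x))))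
      = P * (1 + (if x \<in> A then 1/p - 1 else 0) + (if x = 1 then p ^ card A - 1 else 0))" for x
  proof -
    have "p powr (M - excess_wins 1 A (W(x := Suc (W x))))
        = P * p powr ((if x = 1 then real (card A) else 0) - (if x \<in> A then 1 else 0))"
      unfolding excess_wins_fun_upd[OF finA notin] P_def powr_add[symmetric]
      by (simp add: algebra_simps)
    also have "p powr ((if x = 1 then real (card A) else 0) - (if x \<in> A then 1 else 0))
        = 1 + (if x \<in> A then 1/p - 1 else 0) + (if x = 1 then p ^ card A - 1 else 0)"
      using p notin by (auto simp: powr_minus_divide powr_realpow)
    finally show ?thesis .
  qed
  have "(\<Sum>x\<in>S. f x S * p powr (M - excess_wins 1 A (W(x := Suc (W x)))))
      = P * ((\<Sum>x\<in>S. f x S) + (\<Sum>x\<in>S. if x \<in> A then f x S * (1/p - 1) else 0)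
          + (\<Sum>x\<in>S. if x = 1 then f x S * (p ^ card A - 1) else 0))"
    unfolding factor sum.distrib[symmetric] sum_distrib_left
    by (intro sum.cong) (auto simp: algebra_simps)
  also have "\<dots> = P * (1 + (\<Sum>x\<in>S \<inter> A. f x S) * (1/p - 1) + f 1 S * (p ^ card A - 1))"
    using F(2,5) S(2)
    by (simp add: sum.inter_restrict[symmetric] sum_distrib_right if_distrib[of "\<lambda>y. y * _"]
        cong: if_cong)
  also have "\<dots> \<le> P"
    using choice_mass_le_top[OF p f S A] by (intro mult_left_le) (auto simp: P_def algebra_simps)
  finally show ?thesis unfolding P_def .
qed

lemma ne_update_subset:
  assumes "valid_tiebreak rk" "finite S"
  shows "ne_update M rk W S \<subseteq> S"
proof -
  have "set (rk W S) = S" using assms unfolding valid_tiebreak_def by auto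
  then show ?thesis unfolding ne_update_def Let_def by (auto dest: in_set_takeD)
qed

lemma excess_wins_ge_if_eliminated:
  assumes vt: "valid_tiebreak rk" and "finite S" "t \<in> S"
    and out: "t \<notin> ne_update M rk W S"
  obtains A where "A \<subseteq> S - {t}" "A \<noteq> {}" "M \<le> excess_wins t A W"
proof -
  define L where "L = rk W S"
  have L: "distinct L" "set L = S" "sorted_wrt (\<lambda>a b. W a \<ge> W b) L"
    using vt assms(2) unfolding valid_tiebreak_def L_def by auto
  define ks where "ks = filter (\<lambda>k. (\<Sum>i<k. real (W (L ! i))) - real k * real (W (L ! k)) \<ge> M)
      [1..<length L]"
  have upd: "ne_update M rk W S = (if ks = [] then S else set (take (hd ks) L))"
    unfolding ne_update_def ks_def L_def Let_def by simp
  have "ks \<noteq> []" using upd out assms(3) by auto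
  define k where "k = hd ks"
  have "k \<in> set ks" using \<open>ks \<noteq> []\<close> unfolding k_def by simp
  then have k: "1 \<le> k" "k < length L"
    and test: "M \<le> (\<Sum>i<k. real (W (L ! i))) - real k * real (W (L ! k))"
    unfolding ks_def by auto
  define A where "A = set (take k L)"
  have "t \<notin> A" using upd out \<open>ks \<noteq> []\<close> unfolding A_def k_def by simp
  have cardA: "card A = k" unfolding A_def using L(1) k by (simp add: distinct_card)
  have sumA: "(\<Sum>i\<in>A. real (W i)) = (\<Sum>i<k. real (W (L ! i)))"
    unfolding A_def using L(1) k
    by (simp add: sum.distinct_set_conv_list sum_list_sum_nth lessThan_atLeast0)
  obtain j where j: "j < length L" "L ! j = t" using assms(3) L(2) by (metis in_set_conv_nth)
  have "k \<le> j"
    using \<open>t \<notin> A\<close> j unfolding A_def by (metis in_set_conv_nth length_take min_less_iff_conj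
        nth_take not_le)
  then have "W t \<le> W (L ! k)"
    using sorted_wrt_nth_less[OF L(3) _ j(1)] j by (cases "k = j") auto
  then have "real k * real (W t) \<le> real k * real (W (L ! k))" by (simp add: mult_left_mono)
  then have "M \<le> excess_wins t A W" using test unfolding excess_wins_def cardA sumA by linarith
  moreover have "A \<subseteq> S - {t}" using \<open>t \<notin> A\<close> L(2) unfolding A_def by (auto dest: in_set_takeD)
  moreover have "A \<noteq> {}" using cardA k by auto
  ultimately show ?thesis using that by blast
qed

definition challenger_sets :: "nat \<Rightarrow> nat set set" where
  "challenger_sets K = {A. A \<subseteq> {2..K} \<and> A \<noteq> {}}"

lemma finite_challenger_sets: "finite (challenger_sets K)"
  unfolding challenger_sets_def by (rule finite_subset[of _ "Pow {2..K}"]) auto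

lemma card_challenger_sets: "card (challenger_sets K) = 2 ^ (K - 1) - 1"
proof -
  have "challenger_sets K = Pow {2..K} - {{}}" unfolding challenger_sets_def by auto
  then show ?thesis by (simp add: card_Diff_singleton card_Pow)
qed

definition potential :: "nat \<Rightarrow> real \<Rightarrow> real \<Rightarrow> (nat \<Rightarrow> nat) \<Rightarrow> real" where
  "potential K p M W = (\<Sum>A\<in>challenger_sets K. p powr (M - excess_wins 1 A W))"

definition failure_bound :: "nat \<Rightarrow> real \<Rightarrow> real \<Rightarrow> (nat \<Rightarrow> nat) \<Rightarrow> nat set \<Rightarrow> real" where
  "failure_bound K p M W S = (if 1 \<in> S then potential K p M W else 1)"

lemma failure_bound_nonneg: "0 \<le> failure_bound K p M W S"
  unfolding failure_bound_def potential_def by (auto intro: sum_nonneg)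

lemma failure_bound_ne_update_le:
  assumes p: "0 < p" "p < 1" and vt: "valid_tiebreak rk"
    and S: "S \<subseteq> {1..K}" "1 \<in> S"
  shows "failure_bound K p M W (ne_update M rk W S) \<le> potential K p M W"
proof (cases "1 \<in> ne_update M rk W S")
  case False
  have "finite S" using S(1) finite_subset by blast
  then obtain A where A: "A \<subseteq> S - {1}" "A \<noteq> {}" "M \<le> excess_wins 1 A W"
    using excess_wins_ge_if_eliminated[OF vt _ S(2) False] by blast
  have "A \<in> challenger_sets K" using A S unfolding challenger_sets_def by force
  have "1 = p powr 0" using p by simp
  also have "\<dots> \<le> p powr (M - excess_wins 1 A W)" using A(3) p by (intro powr_mono') auto
  also have "\<dots> \<le> potential K p M W"
    unfolding potential_def using \<open>A \<in> challenger_sets K\<close> finite_challenger_sets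
    by (intro member_le_sum) auto
  finally show ?thesis using False by (simp add: failure_bound_def)
qed (simp add: failure_bound_def)

lemma ne_round_failure_le:
  assumes p: "0 < p" "p < 1" and f: "in_Mp_ranking K p f id" and vt: "valid_tiebreak rk"
    and S: "S \<in> display_sets K" "1 \<in> S"
    and h: "\<And>x. x \<in> S \<Longrightarrow> measure (measure_spmf (h x)) {i. i \<noteq> 1}
      \<le> failure_bound K p M (W(x := Suc (W x))) (ne_update M rk (W(x := Suc (W x))) S)"
  shows "measure (measure_spmf (bind_spmf (spmf_of_pmf (choice_pmf f S)) h)) {i. i \<noteq> 1}
    \<le> potential K p M W"
proof -
  note F = in_Mp_rankingD[OF f S(1)]
  have "measure (measure_spmf (bind_spmf (spmf_of_pmf (choice_pmf f S)) h)) {i. i \<noteq> 1}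
      = measure_pmf.expectation (choice_pmf f S) (\<lambda>x. measure (measure_spmf (h x)) {i. i \<noteq> 1})"
    by (simp add: measure_measure_spmf_bind_pmf)
  also have "\<dots> = (\<Sum>x\<in>S. f x S * measure (measure_spmf (h x)) {i. i \<noteq> 1})"
    using F(5) by (subst integral_measure_pmf[of S])
      (auto simp: pmf_choice_pmf[OF f S(1)] set_pmf_iff split: if_splits)
  also have "\<dots> \<le> (\<Sum>x\<in>S. f x S * potential K p M (W(x := Suc (W x))))"
  proof (intro sum_mono mult_left_mono)
    fix x assume "x \<in> S"
    then show "measure (measure_spmf (h x)) {i. i \<noteq> 1} \<le> potential K p M (W(x := Suc (W x)))"
      using h failure_bound_ne_update_le[OF p vt F(4) S(2)] by (blast intro: order.trans)
    show "0 \<le> f x S" using F(1) \<open>x \<in> S\<close> by (simp add: less_imp_le)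
  qed
  also have "\<dots> = (\<Sum>A\<in>challenger_sets K.
      \<Sum>x\<in>S. f x S * p powr (M - excess_wins 1 A (W(x := Suc (W x)))))"
    unfolding potential_def by (simp add: sum_distrib_left sum.swap[of _ S])
  also have "\<dots> \<le> potential K p M W"
    unfolding potential_def
    by (intro sum_mono expected_potential_le[OF p f S]) (auto simp: challenger_sets_def)
  finally show ?thesis .
qed

lemma ne_run_failure_le:
  assumes p: "0 < p" "p < 1" and f: "in_Mp_ranking K p f id" and vt: "valid_tiebreak rk"
  shows "\<forall>W S. S \<subseteq> {1..K} \<longrightarrow>
    measure (measure_spmf (ne_run M rk f W S)) {i. i \<noteq> 1} \<le> failure_bound K p M W S"
proof (induction rule: ne_run.fixp_induct)
  case 1
  then show ?case
    by (simp add: curry_def) (intro admissible_all admissible_imp admissible_measure_spmf_le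
        admissible_const)
next
  case 2
  then show ?case using failure_bound_nonneg by simp
next
  case (3 g)
  have "measure (measure_spmf (if card S \<le> 1 then return_spmf (the_elem S)
      else bind_spmf (spmf_of_pmf (choice_pmf f S))
        (\<lambda>x. g M rk f (W(x := Suc (W x))) (ne_update M rk (W(x := Suc (W x))) S)))) {i. i \<noteq> 1}
    \<le> failure_bound K p M W S" if S: "S \<subseteq> {1..K}" for W S
  proof (cases "1 \<in> S")
    case False
    then show ?thesis by (simp add: failure_bound_def measure_spmf.subprob_measure_le_1)
  next
    case True
    have "finite S" using S finite_subset by blast
    show ?thesis
    proof (cases "card S \<le> 1")
      case small: True
      then have "S = {1}" using True \<open>finite S\<close> by (auto simp: card_le_Suc0_iff_eq)
      then show ?thesis using failure_bound_nonneg[of K p M W S]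
        by (simp add: measure_measure_spmf_conv_measure_pmf indicator_def image_iff)
    next
      case False
      then have "S \<in> display_sets K" using S unfolding display_sets_def by auto
      have "measure (measure_spmf (bind_spmf (spmf_of_pmf (choice_pmf f S))
          (\<lambda>x. g M rk f (W(x := Suc (W x))) (ne_update M rk (W(x := Suc (W x))) S)))) {i. i \<noteq> 1}
        \<le> potential K p M W"
      proof (rule ne_round_failure_le[OF p f vt \<open>S \<in> display_sets K\<close> True])
        fix x
        have "ne_update M rk (W(x := Suc (W x))) S \<subseteq> {1..K}"
          using ne_update_subset[OF vt \<open>finite S\<close>] S by blast
        then show "measure (measure_spmf (g M rk f (W(x := Suc (W x)))
            (ne_update M rk (W(x := Suc (W x))) S))) {i. i \<noteq> 1}
          \<le> failure_bound K p M (W(x := Suc (W x))) (ne_update M rk (W(x := Suc (W x))) S)"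
          using "3" by blast
      qed
      then show ?thesis using False True by (simp add: failure_bound_def)
    qed
  qed
  then show ?case unfolding Let_def by blast
qed

theorem mainTheorem3:
  fixes K :: nat and p M :: real
    and f :: "nat \<Rightarrow> nat set \<Rightarrow> real"
    and rk :: "(nat \<Rightarrow> nat) \<Rightarrow> nat set \<Rightarrow> nat list"
  assumes "K \<ge> 2" and "0 < p" and "p < 1" and "M > 0"
    and "in_Mp K p f" and "in_Mp_ranking K p f id"
    and "valid_tiebreak rk"
  shows "measure (measure_spmf (NE_output M rk f K)) {i. i \<noteq> 1}
           \<le> (2 ^ (K - 1) - 1) * p powr M"
proof -
  have "measure (measure_spmf (NE_output M rk f K)) {i. i \<noteq> 1} \<le> failure_bound K p M (\<lambda>_. 0) {1..K}"
    unfolding NE_output_def using ne_run_failure_le[OF assms(2,3,6,7), of M] by blast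
  also have "\<dots> = real (card (challenger_sets K)) * p powr M"
    using assms(1) by (simp add: failure_bound_def potential_def excess_wins_def)
  also have "\<dots> = (2 ^ (K - 1) - 1) * p powr M"
    by (simp add: card_challenger_sets of_nat_diff)
  finally show ?thesis .
qed

end
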